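(* Let $S$ be a $\Gamma$-hemiring. If $\mu$ is a prime fuzzy h-ideal of $S$ and $x\in S$ with $x\notin\mu_0$, then $\langle x,\mu\rangle=\mu$. Conversely, let $\mu$ be a fuzzy h-ideal of $S$ with $\operatorname{Im}\mu=\{1,t\}$ for some $t\in[0,1)$; if $\langle x,\mu\rangle=\mu$ for every $x\in S$ with $\mu(x)=t$, then $\mu$ is a prime fuzzy h-ideal of $S$.
   Context: A $\Gamma$-hemiring is a pair of additive commutative semigroups with zero $S$ and $\Gamma$ with a map $S\times\Gamma\times S\to S$, $(a,\alpha,b)\mapsto a\alpha b$, such that for all $a,b,c\in S$, $\alpha,\beta\in\Gamma$: $(a+b)\alpha c=a\alpha c+b\alpha c$; $a\alpha(b+c)=a\alpha b+a\alpha c$; $a(\alpha+\beta)b=a\alpha b+a\beta b$; $a\alpha(b\beta c)=(a\alpha b)\beta c$; $0\alpha a=0=a\alpha0$; $a0b=0=b0a$. A fuzzy h-ideal of $S$ is a map $\mu:S\to[0,1]$, not identically $0$, such that for all $x,y,a,b,z\in S$, $\gamma\in\Gamma$: $\mu(x+y)\ge\min\{\mu(x),\mu(y)\}$; $\mu(x\gamma y)\ge\mu(x)$ and $\mu(x\gamma y)\ge\mu(y)$; $x+a+z=b+z$ implies $\mu(x)\ge\min\{\mu(a),\mu(b)\}$. For fuzzy subsets $\sigma,\theta$, the h-product is $(\sigma\Gamma_h\theta)(x)=\sup\min\{\sigma(a_1),\sigma(a_2),\theta(b_1),\theta(b_2)\}$, the supremum over all $z,a_1,a_2,b_1,b_2\in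 S$, $\gamma,\delta\in\Gamma$ with $x+a_1\gamma b_1+z=a_2\delta b_2+z$, and $0$ if no such expression exists. Inclusion means pointwise $\le$. A fuzzy h-ideal $\mu$ is prime if it is not constant and for any fuzzy h-ideals $\sigma,\theta$, $\sigma\Gamma_h\theta\subseteq\mu$ implies $\sigma\subseteq\mu$ or $\theta\subseteq\mu$. $\mu_0=\{x\in S:\mu(x)=\mu(0)\}$; $\operatorname{Im}\mu$ is the image of $\mu$. The extension of $\mu$ by $x$ is $\langle x,\mu\rangle(y)=\inf_{s\in S,\ \alpha,\gamma\in\Gamma}\mu(x\alpha s\gamma y)$. *)

theory Defs
  imports Main "HOL.Real"
begin

text \<open>A Gamma-hemiring: S (the type 'a) and Gamma (the type 'g) are additive commutative
  semigroups with zero (modelled as comm_monoid_add), together with a ternary operation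
  M a alpha b = a alpha b.\<close>

definition gamma_hemiring :: "('a::comm_monoid_add \<Rightarrow> 'g::comm_monoid_add \<Rightarrow> 'a \<Rightarrow> 'a) \<Rightarrow> bool" where
  "gamma_hemiring M \<longleftrightarrow>
     (\<forall>a b c \<alpha>. M (a + b) \<alpha> c = M a \<alpha> c + M b \<alpha> c) \<and>
     (\<forall>a b c \<alpha>. M a \<alpha> (b + c) = M a \<alpha> b + M a \<alpha> c) \<and>
     (\<forall>a b \<alpha> \<beta>. M a (\<alpha> + \<beta>) b = M a \<alpha> b + M a \<beta> b) \<and>
     (\<forall>a b c \<alpha> \<beta>. M a \<alpha> (M b \<beta> c) = M (M a \<alpha> b) \<beta> c) \<and>
     (\<forall>a \<alpha>. M 0 \<alpha> a = 0 \<and> M a \<alpha> 0 = 0) \<and>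
     (\<forall>a b. M a 0 b = 0 \<and> M b 0 a = 0)"

definition fuzzy_subset :: "('a \<Rightarrow> real) \<Rightarrow> bool" where
  "fuzzy_subset \<mu> \<longleftrightarrow> (\<forall>x. 0 \<le> \<mu> x \<and> \<mu> x \<le> 1)"

definition fuzzy_h_ideal :: "('a::comm_monoid_add \<Rightarrow> 'g \<Rightarrow> 'a \<Rightarrow> 'a) \<Rightarrow> ('a \<Rightarrow> real) \<Rightarrow> bool" where
  "fuzzy_h_ideal M \<mu> \<longleftrightarrow>
     fuzzy_subset \<mu> \<and> (\<exists>x. \<mu> x \<noteq> 0) \<and>
     (\<forall>x y. \<mu> (x + y) \<ge> min (\<mu> x) (\<mu> y)) \<and>
     (\<forall>x y \<gamma>. \<mu> (M x \<gamma> y) \<ge> \<mu> x \<and> \<mu> (M x \<gamma> y) \<ge> \<mu> y) \<and>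
     (\<forall>x a b z. x + a + z = b + z \<longrightarrow> \<mu> x \<ge> min (\<mu> a) (\<mu> b))"

definition h_product :: "('a::comm_monoid_add \<Rightarrow> 'g \<Rightarrow> 'a \<Rightarrow> 'a) \<Rightarrow> ('a \<Rightarrow> real) \<Rightarrow> ('a \<Rightarrow> real) \<Rightarrow> 'a \<Rightarrow> real" where
  "h_product M \<sigma> \<theta> x =
     (let V = {min (min (\<sigma> a1) (\<sigma> a2)) (min (\<theta> b1) (\<theta> b2)) | z a1 a2 b1 b2 \<gamma> \<delta>.
                 x + M a1 \<gamma> b1 + z = M a2 \<delta> b2 + z}
      in if V = {} then 0 else Sup V)"

definition prime_fuzzy_h_ideal :: "('a::comm_monoid_add \<Rightarrow> 'g \<Rightarrow> 'a \<Rightarrow> 'a) \<Rightarrow> ('a \<Rightarrow> real) \<Rightarrow> bool" where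
  "prime_fuzzy_h_ideal M \<mu> \<longleftrightarrow>
     fuzzy_h_ideal M \<mu> \<and> (\<exists>x y. \<mu> x \<noteq> \<mu> y) \<and>
     (\<forall>\<sigma> \<theta>. fuzzy_h_ideal M \<sigma> \<and> fuzzy_h_ideal M \<theta> \<and> h_product M \<sigma> \<theta> \<le> \<mu>
        \<longrightarrow> \<sigma> \<le> \<mu> \<or> \<theta> \<le> \<mu>)"

definition level_zero :: "('a::zero \<Rightarrow> real) \<Rightarrow> 'a set" where
  "level_zero \<mu> = {x. \<mu> x = \<mu> 0}"

definition fuzzy_ext :: "('a \<Rightarrow> 'g \<Rightarrow> 'a \<Rightarrow> 'a) \<Rightarrow> 'a \<Rightarrow> ('a \<Rightarrow> real) \<Rightarrow> 'a \<Rightarrow> real" where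
  "fuzzy_ext M x \<mu> y = (INF p \<in> (UNIV :: ('a \<times> 'g \<times> 'g) set). \<mu> (M (M x (fst (snd p)) (fst p)) (snd (snd p)) y))"

end

theory Submission
  imports Defs
begin

text \<open>Call \<open>A\<^sub>\<theta> = {a. \<forall>\<gamma> b. \<theta> b \<le> \<mu> (a\<gamma>b)}\<close> the quotient of \<mu> by \<theta>. For a fuzzy h-ideal
  \<open>\<theta> \<le> \<mu>(0)\<close> it is an h-ideal, and its indicator (at height \<open>\<mu>(0)\<close>) has h-product with
  \<theta> below \<mu>. Primeness of \<mu> therefore forces \<open>\<theta> \<le> \<mu>\<close> unless all of \<open>A\<^sub>\<theta>\<close> lies in \<open>\<mu>\<^sub>0\<close>.
  For \<open>x \<notin> \<mu>\<^sub>0\<close> this is applied twice: to the constant \<open>\<mu>(0)\<close>, which gives some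
  \<open>x\<alpha>s \<notin> \<mu>\<^sub>0\<close>, and then to \<open>\<langle>x,\<mu>\<rangle>\<close>, whose quotient contains every \<open>x\<alpha>s\<close>; hence
  \<open>\<langle>x,\<mu>\<rangle> \<le> \<mu>\<close>, and \<open>\<mu> \<le> \<langle>x,\<mu>\<rangle>\<close> always holds.

  Conversely, if \<mu> takes only the values 1 and \<open>t\<close> and \<open>\<sigma>(a) > \<mu>(a)\<close>, \<open>\<theta>(b) > \<mu>(b)\<close>, then
  \<open>\<mu>(a) = \<mu>(b) = t\<close>, so \<open>\<langle>a,\<mu>\<rangle>(b) = t\<close> yields some \<open>(a\<alpha>s)\<gamma>b\<close> of value \<open>t\<close>, at which
  \<open>\<sigma>\<Gamma>\<^sub>h\<theta>\<close> is at least \<open>min (\<sigma> a) (\<theta> b) > t\<close>.\<close>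

lemma
  assumes "gamma_hemiring M"
  shows gamma_hemiring_add_left: "M (a + b) \<alpha> c = M a \<alpha> c + M b \<alpha> c"
    and gamma_hemiring_add_right: "M a \<alpha> (b + c) = M a \<alpha> b + M a \<alpha> c"
    and gamma_hemiring_assoc: "M a \<alpha> (M b \<beta> c) = M (M a \<alpha> b) \<beta> c"
    and gamma_hemiring_zero_left: "M 0 \<alpha> a = 0"
  using assms unfolding gamma_hemiring_def by auto

lemma
  assumes "fuzzy_h_ideal M \<mu>"
  shows fuzzy_h_ideal_fuzzy_subset: "fuzzy_subset \<mu>"
    and fuzzy_h_ideal_nonneg: "0 \<le> \<mu> x"
    and fuzzy_h_ideal_le_one: "\<mu> x \<le> 1"
    and fuzzy_h_ideal_nonzero: "\<exists>w. \<mu> w \<noteq> 0"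
    and fuzzy_h_ideal_add: "min (\<mu> x) (\<mu> y) \<le> \<mu> (x + y)"
    and fuzzy_h_ideal_mult_left: "\<mu> x \<le> \<mu> (M x \<gamma> y)"
    and fuzzy_h_ideal_mult_right: "\<mu> y \<le> \<mu> (M x \<gamma> y)"
    and fuzzy_h_ideal_h_closed: "x + a + z = b + z \<Longrightarrow> min (\<mu> a) (\<mu> b) \<le> \<mu> x"
  using assms unfolding fuzzy_h_ideal_def fuzzy_subset_def by blast+

lemma fuzzy_h_ideal_le_zero:
  assumes "gamma_hemiring M" "fuzzy_h_ideal M \<mu>"
  shows "\<mu> y \<le> \<mu> 0"
  using fuzzy_h_ideal_mult_right[OF assms(2), of y 0 0] gamma_hemiring_zero_left[OF assms(1)]
  by simp

lemma fuzzy_h_ideal_zero_pos: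
  assumes "gamma_hemiring M" "fuzzy_h_ideal M \<mu>"
  shows "0 < \<mu> 0"
proof -
  obtain w where "\<mu> w \<noteq> 0" using fuzzy_h_ideal_nonzero[OF assms(2)] by blast
  with fuzzy_h_ideal_nonneg[OF assms(2), of w] fuzzy_h_ideal_le_zero[OF assms, of w]
  show ?thesis by linarith
qed

lemma fuzzy_h_ideal_const:
  assumes "0 < c" "c \<le> (1::real)"
  shows "fuzzy_h_ideal M (\<lambda>_. c)"
  using assms unfolding fuzzy_h_ideal_def fuzzy_subset_def by auto

definition h_ideal :: "('a::comm_monoid_add \<Rightarrow> 'g \<Rightarrow> 'a \<Rightarrow> 'a) \<Rightarrow> 'a set \<Rightarrow> bool" where
  "h_ideal M I \<longleftrightarrow> 0 \<in> I \<and> (\<forall>a\<in>I. \<forall>b\<in>I. a + b \<in> I) \<and>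
     (\<forall>a\<in>I. \<forall>c \<gamma>. M a \<gamma> c \<in> I \<and> M c \<gamma> a \<in> I) \<and>
     (\<forall>x a b z. x + a + z = b + z \<longrightarrow> a \<in> I \<longrightarrow> b \<in> I \<longrightarrow> x \<in> I)"

lemma fuzzy_h_ideal_indicator:
  assumes "h_ideal M I" "0 < c" "c \<le> (1::real)"
  shows "fuzzy_h_ideal M (\<lambda>z. if z \<in> I then c else 0)"
  using assms unfolding fuzzy_h_ideal_def fuzzy_subset_def h_ideal_def
  by (intro conjI allI impI exI[of _ 0]) (auto, blast+)

definition fuzzy_quotient :: "('a \<Rightarrow> 'g \<Rightarrow> 'a \<Rightarrow> 'a) \<Rightarrow> ('a \<Rightarrow> real) \<Rightarrow> ('a \<Rightarrow> real) \<Rightarrow> 'a set" where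
  "fuzzy_quotient M \<mu> \<theta> = {a. \<forall>\<gamma> b. \<theta> b \<le> \<mu> (M a \<gamma> b)}"

lemma h_ideal_fuzzy_quotient:
  assumes g: "gamma_hemiring M" and \<mu>: "fuzzy_h_ideal M \<mu>" and \<theta>: "fuzzy_h_ideal M \<theta>"
    and \<theta>_le: "\<And>b. \<theta> b \<le> \<mu> 0"
  shows "h_ideal M (fuzzy_quotient M \<mu> \<theta>)"
  unfolding h_ideal_def fuzzy_quotient_def Ball_def mem_Collect_eq
proof (intro conjI allI impI)
  fix \<gamma> b
  show "\<theta> b \<le> \<mu> (M 0 \<gamma> b)" using \<theta>_le by (simp add: gamma_hemiring_zero_left[OF g])
next
  fix a a' \<gamma> d
  assume "\<forall>\<gamma> b. \<theta> b \<le> \<mu> (M a \<gamma> b)" "\<forall>\<gamma> b. \<theta> b \<le> \<mu> (M a' \<gamma> b)"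
  then have "\<theta> d \<le> \<mu> (M a \<gamma> d)" "\<theta> d \<le> \<mu> (M a' \<gamma> d)" by blast+
  with fuzzy_h_ideal_add[OF \<mu>, of "M a \<gamma> d" "M a' \<gamma> d"]
  show "\<theta> d \<le> \<mu> (M (a + a') \<gamma> d)" by (simp add: gamma_hemiring_add_left[OF g])
next
  fix a c \<gamma> \<beta> b
  assume a: "\<forall>\<gamma> b. \<theta> b \<le> \<mu> (M a \<gamma> b)"
  have "\<theta> b \<le> \<theta> (M c \<beta> b)" by (rule fuzzy_h_ideal_mult_right[OF \<theta>])
  also have "\<dots> \<le> \<mu> (M a \<gamma> (M c \<beta> b))" using a by blast
  finally show "\<theta> b \<le> \<mu> (M (M a \<gamma> c) \<beta> b)" by (simp add: gamma_hemiring_assoc[OF g])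
  have "\<theta> b \<le> \<mu> (M a \<beta> b)" using a by blast
  also have "\<dots> \<le> \<mu> (M c \<gamma> (M a \<beta> b))" by (rule fuzzy_h_ideal_mult_right[OF \<mu>])
  finally show "\<theta> b \<le> \<mu> (M (M c \<gamma> a) \<beta> b)" by (simp add: gamma_hemiring_assoc[OF g])
next
  fix x a b z \<gamma> d
  assume e: "x + a + z = b + z"
    and "\<forall>\<gamma> b. \<theta> b \<le> \<mu> (M a \<gamma> b)" "\<forall>\<gamma> c. \<theta> c \<le> \<mu> (M b \<gamma> c)"
  then have "\<theta> d \<le> \<mu> (M a \<gamma> d)" "\<theta> d \<le> \<mu> (M b \<gamma> d)" by blast+
  moreover from e have "M x \<gamma> d + M a \<gamma> d + M z \<gamma> d = M b \<gamma> d + M z \<gamma> d"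
    by (metis gamma_hemiring_add_left[OF g])
  then have "min (\<mu> (M a \<gamma> d)) (\<mu> (M b \<gamma> d)) \<le> \<mu> (M x \<gamma> d)"
    by (rule fuzzy_h_ideal_h_closed[OF \<mu>])
  ultimately show "\<theta> d \<le> \<mu> (M x \<gamma> d)" by linarith
qed

lemma h_product_le:
  assumes "\<And>a1 a2 b1 b2 \<gamma> \<delta> z. x + M a1 \<gamma> b1 + z = M a2 \<delta> b2 + z \<Longrightarrow>
      min (min (\<sigma> a1) (\<sigma> a2)) (min (\<theta> b1) (\<theta> b2)) \<le> \<mu> x"
    and "0 \<le> \<mu> x"
  shows "h_product M \<sigma> \<theta> x \<le> \<mu> x"
  unfolding h_product_def Let_def using assms by (auto intro!: cSup_least)

lemma h_product_ge:
  assumes "fuzzy_subset \<sigma>" and "x + M a1 \<gamma> b1 + z = M a2 \<delta> b2 + z"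
  shows "min (min (\<sigma> a1) (\<sigma> a2)) (min (\<theta> b1) (\<theta> b2)) \<le> h_product M \<sigma> \<theta> x"
proof -
  let ?V = "{min (min (\<sigma> a1) (\<sigma> a2)) (min (\<theta> b1) (\<theta> b2)) | z a1 a2 b1 b2 \<gamma> \<delta>.
               x + M a1 \<gamma> b1 + z = M a2 \<delta> b2 + z}"
  have mem: "min (min (\<sigma> a1) (\<sigma> a2)) (min (\<theta> b1) (\<theta> b2)) \<in> ?V" using assms(2) by blast
  have "bdd_above ?V"
  proof (rule bdd_aboveI[of _ 1])
    fix v assume "v \<in> ?V"
    then obtain c1 c2 d1 d2 where "v = min (min (\<sigma> c1) (\<sigma> c2)) (min (\<theta> d1) (\<theta> d2))" by blast
    with assms(1) show "v \<le> 1" by (auto simp: fuzzy_subset_def min_le_iff_disj)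
  qed
  with mem have "min (min (\<sigma> a1) (\<sigma> a2)) (min (\<theta> b1) (\<theta> b2)) \<le> Sup ?V" by (rule cSup_upper)
  moreover have "?V \<noteq> {}" using mem by blast
  ultimately show ?thesis unfolding h_product_def Let_def by (simp only: if_False)
qed

lemma h_product_mult_ge:
  assumes "gamma_hemiring M" "fuzzy_h_ideal M \<sigma>"
  shows "min (\<sigma> a) (\<theta> b) \<le> h_product M \<sigma> \<theta> (M a \<gamma> b)"
proof -
  have "M a \<gamma> b + M 0 \<gamma> b + 0 = M a \<gamma> b + 0" by (simp add: gamma_hemiring_zero_left[OF assms(1)])
  then have "min (min (\<sigma> 0) (\<sigma> a)) (min (\<theta> b) (\<theta> b)) \<le> h_product M \<sigma> \<theta> (M a \<gamma> b)"
    by (rule h_product_ge[OF fuzzy_h_ideal_fuzzy_subset[OF assms(2)]])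
  then show ?thesis using fuzzy_h_ideal_le_zero[OF assms, of a] by linarith
qed

lemma h_product_indicator_quotient_le:
  assumes "fuzzy_h_ideal M \<mu>"
  shows "h_product M (\<lambda>z. if z \<in> fuzzy_quotient M \<mu> \<theta> then c else 0) \<theta> \<le> \<mu>"
proof (rule le_funI, rule h_product_le)
  fix x a1 a2 b1 b2 \<gamma> \<delta> z
  assume e: "x + M a1 \<gamma> b1 + z = M a2 \<delta> b2 + z"
  show "min (min (if a1 \<in> fuzzy_quotient M \<mu> \<theta> then c else 0) (if a2 \<in> fuzzy_quotient M \<mu> \<theta> then c else 0))
      (min (\<theta> b1) (\<theta> b2)) \<le> \<mu> x"
  proof (cases "a1 \<in> fuzzy_quotient M \<mu> \<theta> \<and> a2 \<in> fuzzy_quotient M \<mu> \<theta>")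
    case True
    then have "\<theta> b1 \<le> \<mu> (M a1 \<gamma> b1)" "\<theta> b2 \<le> \<mu> (M a2 \<delta> b2)" unfolding fuzzy_quotient_def by blast+
    with fuzzy_h_ideal_h_closed[OF assms e] show ?thesis by linarith
  next
    case False
    then show ?thesis using fuzzy_h_ideal_nonneg[OF assms, of x] by auto
  qed
qed (rule fuzzy_h_ideal_nonneg[OF assms])

lemma prime_fuzzy_h_ideal_quotient_dichotomy:
  assumes g: "gamma_hemiring M" and p: "prime_fuzzy_h_ideal M \<mu>" and \<theta>: "fuzzy_h_ideal M \<theta>"
    and \<theta>_le: "\<And>b. \<theta> b \<le> \<mu> 0"
  shows "\<theta> \<le> \<mu> \<or> fuzzy_quotient M \<mu> \<theta> \<subseteq> level_zero \<mu>"
proof -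
  have \<mu>: "fuzzy_h_ideal M \<mu>" using p unfolding prime_fuzzy_h_ideal_def by blast
  define \<sigma> where "\<sigma> = (\<lambda>z. if z \<in> fuzzy_quotient M \<mu> \<theta> then \<mu> 0 else 0)"
  have "fuzzy_h_ideal M \<sigma>" unfolding \<sigma>_def
    by (rule fuzzy_h_ideal_indicator[OF h_ideal_fuzzy_quotient[OF g \<mu> \<theta> \<theta>_le]
          fuzzy_h_ideal_zero_pos[OF g \<mu>] fuzzy_h_ideal_le_one[OF \<mu>]])
  moreover have "h_product M \<sigma> \<theta> \<le> \<mu>"
    unfolding \<sigma>_def by (rule h_product_indicator_quotient_le[OF \<mu>])
  ultimately have "\<sigma> \<le> \<mu> \<or> \<theta> \<le> \<mu>" using p \<theta> unfolding prime_fuzzy_h_ideal_def by blast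
  then show ?thesis
  proof
    assume "\<sigma> \<le> \<mu>"
    have "\<mu> a = \<mu> 0" if "a \<in> fuzzy_quotient M \<mu> \<theta>" for a
      using le_funD[OF \<open>\<sigma> \<le> \<mu>\<close>, of a] that fuzzy_h_ideal_le_zero[OF g \<mu>, of a]
      unfolding \<sigma>_def by simp
    then show ?thesis unfolding level_zero_def by blast
  qed simp
qed

lemma fuzzy_ext_le:
  assumes "fuzzy_subset \<mu>"
  shows "fuzzy_ext M x \<mu> y \<le> \<mu> (M (M x \<alpha> s) \<gamma> y)"
proof -
  have "fuzzy_ext M x \<mu> y \<le> \<mu> (M (M x (fst (snd (s, \<alpha>, \<gamma>))) (fst (s, \<alpha>, \<gamma>))) (snd (snd (s, \<alpha>, \<gamma>))) y)"
    unfolding fuzzy_ext_def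
    using assms unfolding fuzzy_subset_def by (intro cINF_lower bdd_belowI[of _ 0]) auto
  then show ?thesis by simp
qed

lemma fuzzy_ext_greatest:
  assumes "\<And>\<alpha> s \<gamma>. c \<le> \<mu> (M (M x \<alpha> s) \<gamma> y)"
  shows "c \<le> fuzzy_ext M x \<mu> y"
  unfolding fuzzy_ext_def by (rule cINF_greatest) (auto intro: assms)

lemma fuzzy_ext_lessE:
  assumes "fuzzy_ext M x \<mu> y < c"
  obtains \<alpha> s \<gamma> where "\<mu> (M (M x \<alpha> s) \<gamma> y) < c"
  using fuzzy_ext_greatest[of c \<mu> M x y] assms not_le by blast

lemma fuzzy_ext_ge:
  assumes "fuzzy_h_ideal M \<mu>"
  shows "\<mu> y \<le> fuzzy_ext M x \<mu> y"
  by (rule fuzzy_ext_greatest) (rule fuzzy_h_ideal_mult_right[OF assms])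

lemma fuzzy_ext_min_le:
  fixes M :: "'a \<Rightarrow> 'g \<Rightarrow> 'a \<Rightarrow> 'a"
  assumes "fuzzy_subset \<mu>"
    and "\<And>\<alpha> s \<gamma>. min (\<mu> (M (M x \<alpha> s) \<gamma> a)) (\<mu> (M (M x \<alpha> s) \<gamma> b)) \<le> \<mu> (M (M x \<alpha> s) \<gamma> c)"
  shows "min (fuzzy_ext M x \<mu> a) (fuzzy_ext M x \<mu> b) \<le> fuzzy_ext M x \<mu> c"
proof (rule fuzzy_ext_greatest)
  fix \<alpha> s \<gamma>
  show "min (fuzzy_ext M x \<mu> a) (fuzzy_ext M x \<mu> b) \<le> \<mu> (M (M x \<alpha> s) \<gamma> c)"
    using assms(2)[of \<alpha> s \<gamma>] fuzzy_ext_le[OF assms(1), of M x a \<alpha> s \<gamma>]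
      fuzzy_ext_le[OF assms(1), of M x b \<alpha> s \<gamma>]
    by linarith
qed

lemma fuzzy_h_ideal_fuzzy_ext:
  fixes M :: "'a::comm_monoid_add \<Rightarrow> 'g::comm_monoid_add \<Rightarrow> 'a \<Rightarrow> 'a"
  assumes g: "gamma_hemiring M" and \<mu>: "fuzzy_h_ideal M \<mu>"
  shows "fuzzy_h_ideal M (fuzzy_ext M x \<mu>)"
  unfolding fuzzy_h_ideal_def fuzzy_subset_def
proof (intro conjI allI impI)
  note sub = fuzzy_h_ideal_fuzzy_subset[OF \<mu>]
  fix y
  show "0 \<le> fuzzy_ext M x \<mu> y" by (rule fuzzy_ext_greatest) (rule fuzzy_h_ideal_nonneg[OF \<mu>])
  show "fuzzy_ext M x \<mu> y \<le> 1"
    using fuzzy_ext_le[OF sub, of M x y 0 0 0] fuzzy_h_ideal_le_one[OF \<mu>] by (rule order_trans)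
  obtain w where "\<mu> w \<noteq> 0" using fuzzy_h_ideal_nonzero[OF \<mu>] by blast
  then show "\<exists>w. fuzzy_ext M x \<mu> w \<noteq> 0"
    using fuzzy_h_ideal_nonneg[OF \<mu>, of w] fuzzy_ext_ge[OF \<mu>, of w x] by (intro exI[of _ w]) linarith
next
  fix y y'
  show "min (fuzzy_ext M x \<mu> y) (fuzzy_ext M x \<mu> y') \<le> fuzzy_ext M x \<mu> (y + y')"
    using fuzzy_h_ideal_fuzzy_subset[OF \<mu>]
    by (rule fuzzy_ext_min_le) (simp add: gamma_hemiring_add_right[OF g] fuzzy_h_ideal_add[OF \<mu>])
next
  fix y a b z :: 'a
  assume e: "y + a + z = b + z"
  show "min (fuzzy_ext M x \<mu> a) (fuzzy_ext M x \<mu> b) \<le> fuzzy_ext M x \<mu> y"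
  proof (rule fuzzy_ext_min_le[OF fuzzy_h_ideal_fuzzy_subset[OF \<mu>]], rule fuzzy_h_ideal_h_closed[OF \<mu>])
    fix \<alpha> s \<gamma>
    from e show "M (M x \<alpha> s) \<gamma> y + M (M x \<alpha> s) \<gamma> a + M (M x \<alpha> s) \<gamma> z
        = M (M x \<alpha> s) \<gamma> b + M (M x \<alpha> s) \<gamma> z"
      by (metis gamma_hemiring_add_right[OF g])
  qed
next
  fix y y' \<beta>
  show "fuzzy_ext M x \<mu> y \<le> fuzzy_ext M x \<mu> (M y \<beta> y')"
  proof (rule fuzzy_ext_greatest)
    fix \<alpha> s \<gamma>
    have "fuzzy_ext M x \<mu> y \<le> \<mu> (M (M x \<alpha> s) \<gamma> y)"
      by (rule fuzzy_ext_le[OF fuzzy_h_ideal_fuzzy_subset[OF \<mu>]])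
    also have "\<dots> \<le> \<mu> (M (M (M x \<alpha> s) \<gamma> y) \<beta> y')" by (rule fuzzy_h_ideal_mult_left[OF \<mu>])
    finally show "fuzzy_ext M x \<mu> y \<le> \<mu> (M (M x \<alpha> s) \<gamma> (M y \<beta> y'))"
      by (simp add: gamma_hemiring_assoc[OF g])
  qed
  show "fuzzy_ext M x \<mu> y' \<le> fuzzy_ext M x \<mu> (M y \<beta> y')"
  proof (rule fuzzy_ext_greatest)
    fix \<alpha> s \<gamma>
    have "fuzzy_ext M x \<mu> y' \<le> \<mu> (M (M x \<alpha> (M s \<gamma> y)) \<beta> y')"
      by (rule fuzzy_ext_le[OF fuzzy_h_ideal_fuzzy_subset[OF \<mu>]])
    then show "fuzzy_ext M x \<mu> y' \<le> \<mu> (M (M x \<alpha> s) \<gamma> (M y \<beta> y'))"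
      by (simp add: gamma_hemiring_assoc[OF g])
  qed
qed

lemma fuzzy_ext_eq_if_prime:
  assumes g: "gamma_hemiring M" and p: "prime_fuzzy_h_ideal M \<mu>" and x: "x \<notin> level_zero \<mu>"
  shows "fuzzy_ext M x \<mu> = \<mu>"
proof -
  have \<mu>: "fuzzy_h_ideal M \<mu>" using p unfolding prime_fuzzy_h_ideal_def by blast
  note sub = fuzzy_h_ideal_fuzzy_subset[OF \<mu>]
  note le_zero = fuzzy_h_ideal_le_zero[OF g \<mu>]
  have "\<not> (\<lambda>_. \<mu> 0) \<le> \<mu>"
  proof
    assume "(\<lambda>_. \<mu> 0) \<le> \<mu>"
    then have "\<mu> x = \<mu> 0" using le_zero[of x] by (metis antisym le_funD)
    with x show False by (simp add: level_zero_def)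
  qed
  then have "x \<notin> fuzzy_quotient M \<mu> (\<lambda>_. \<mu> 0)"
    using prime_fuzzy_h_ideal_quotient_dichotomy[OF g p
        fuzzy_h_ideal_const[OF fuzzy_h_ideal_zero_pos[OF g \<mu>] fuzzy_h_ideal_le_one[OF \<mu>]]]
      x by blast
  then obtain \<alpha> s where "\<not> \<mu> 0 \<le> \<mu> (M x \<alpha> s)" unfolding fuzzy_quotient_def by blast
  then have "M x \<alpha> s \<notin> level_zero \<mu>" by (simp add: level_zero_def)
  moreover have "M x \<alpha> s \<in> fuzzy_quotient M \<mu> (fuzzy_ext M x \<mu>)"
    unfolding fuzzy_quotient_def using fuzzy_ext_le[OF sub, of M x] by blast
  moreover have "fuzzy_ext M x \<mu> b \<le> \<mu> 0" for b
    using fuzzy_ext_le[OF sub, of M x b 0 0 0] le_zero by (rule order_trans)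
  ultimately have "fuzzy_ext M x \<mu> \<le> \<mu>"
    using prime_fuzzy_h_ideal_quotient_dichotomy[OF g p fuzzy_h_ideal_fuzzy_ext[OF g \<mu>]] by blast
  moreover have "\<mu> \<le> fuzzy_ext M x \<mu>" using fuzzy_ext_ge[OF \<mu>] by (simp add: le_fun_def)
  ultimately show ?thesis by (rule antisym)
qed

lemma prime_fuzzy_h_ideal_if_two_valued:
  assumes g: "gamma_hemiring M" and \<mu>: "fuzzy_h_ideal M \<mu>" and range: "range \<mu> = {1, t}"
    and "t < 1" and ext: "\<And>x. \<mu> x = t \<Longrightarrow> fuzzy_ext M x \<mu> = \<mu>"
  shows "prime_fuzzy_h_ideal M \<mu>"
  unfolding prime_fuzzy_h_ideal_def
proof (intro conjI allI impI)
  show "fuzzy_h_ideal M \<mu>" by (rule \<mu>)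
  obtain u v where "\<mu> u = 1" "\<mu> v = t" using range by (metis insertI1 insertI2 rangeE singletonI)
  with \<open>t < 1\<close> show "\<exists>x y. \<mu> x \<noteq> \<mu> y" by (intro exI[of _ u] exI[of _ v]) simp
next
  fix \<sigma> \<theta>
  assume "fuzzy_h_ideal M \<sigma> \<and> fuzzy_h_ideal M \<theta> \<and> h_product M \<sigma> \<theta> \<le> \<mu>"
  then have \<sigma>: "fuzzy_h_ideal M \<sigma>" and \<theta>: "fuzzy_h_ideal M \<theta>" and prod: "h_product M \<sigma> \<theta> \<le> \<mu>"
    by auto
  have two_values: "\<mu> y = 1 \<or> \<mu> y = t" for y using range by (metis insert_iff rangeI singletonD)
  show "\<sigma> \<le> \<mu> \<or> \<theta> \<le> \<mu>"
  proof (rule ccontr)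
    assume "\<not> (\<sigma> \<le> \<mu> \<or> \<theta> \<le> \<mu>)"
    then obtain a b where a: "\<mu> a < \<sigma> a" and b: "\<mu> b < \<theta> b" unfolding le_fun_def by (meson not_le)
    have "\<mu> a = t" using two_values[of a] a fuzzy_h_ideal_le_one[OF \<sigma>, of a] by auto
    moreover have "\<mu> b = t" using two_values[of b] b fuzzy_h_ideal_le_one[OF \<theta>, of b] by auto
    ultimately have "fuzzy_ext M a \<mu> b < 1" using ext \<open>t < 1\<close> by simp
    then obtain \<alpha> s \<gamma> where "\<mu> (M (M a \<alpha> s) \<gamma> b) < 1" by (rule fuzzy_ext_lessE)
    then have "\<mu> (M (M a \<alpha> s) \<gamma> b) = t" using two_values by force
    moreover have "min (\<sigma> (M a \<alpha> s)) (\<theta> b) \<le> \<mu> (M (M a \<alpha> s) \<gamma> b)"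
      using h_product_mult_ge[OF g \<sigma>] prod unfolding le_fun_def by (metis order_trans)
    moreover have "\<sigma> a \<le> \<sigma> (M a \<alpha> s)" by (rule fuzzy_h_ideal_mult_left[OF \<sigma>])
    ultimately show False using a b \<open>\<mu> a = t\<close> \<open>\<mu> b = t\<close> by linarith
  qed
qed

theorem theorem3p21:
  fixes M :: "'a::comm_monoid_add \<Rightarrow> 'g::comm_monoid_add \<Rightarrow> 'a \<Rightarrow> 'a"
  assumes "gamma_hemiring M"
  shows "(\<forall>\<mu> x. prime_fuzzy_h_ideal M \<mu> \<and> x \<notin> level_zero \<mu> \<longrightarrow> fuzzy_ext M x \<mu> = \<mu>) \<and>
         (\<forall>\<mu> (t::real). fuzzy_h_ideal M \<mu> \<and> range \<mu> = {1, t} \<and> 0 \<le> t \<and> t < 1 \<and>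
             (\<forall>x. \<mu> x = t \<longrightarrow> fuzzy_ext M x \<mu> = \<mu>) \<longrightarrow> prime_fuzzy_h_ideal M \<mu>)"
  using fuzzy_ext_eq_if_prime[OF assms] prime_fuzzy_h_ideal_if_two_valued[OF assms] by blast

end
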